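(* Let $n\geq3$. Then $\Gamma_2(B_n(\mathbb{K}))=\Gamma_i(B_n(\mathbb{K}))$ for all $i\geq3$, and this subgroup equals the normal closure of $\sigma_2^{-1}\sigma_1$ in $B_n(\mathbb{K})$; it is nontrivial, so $B_n(\mathbb{K})$ is not residually nilpotent.
   Context: $\mathbb{K}$ is the Klein bottle. $B_n(\mathbb{K})$ has the presentation with generators $a,b,\sigma_1,\ldots,\sigma_{n-1}$ and relations: $\sigma_i\sigma_{i+1}\sigma_i=\sigma_{i+1}\sigma_i\sigma_{i+1}$; $\sigma_j\sigma_i=\sigma_i\sigma_j$ if $|i-j|\geq2$; $a\sigma_j=\sigma_ja$ and $b\sigma_j=\sigma_jb$ for $j\geq2$; $b^{-1}\sigma_1a=\sigma_1a\sigma_1b^{-1}\sigma_1$; $a(\sigma_1a\sigma_1)=(\sigma_1a\sigma_1)a$; $b(\sigma_1^{-1}b\sigma_1)=(\sigma_1^{-1}b\sigma_1^{-1})b$; $\sigma_1\cdots\sigma_{n-2}\sigma_{n-1}^2\sigma_{n-2}\cdots\sigma_1=ba^{-1}b^{-1}a^{-1}$. $\Gamma_1=G$, $\Gamma_{i+1}=[\Gamma_i,G]$. *)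

theory Defs
  imports "HOL-Algebra.Algebra"
begin

text \<open>A letter is a pair (generator, flag); flag True means the inverse of the generator.\<close>
type_synonym 'g word = "('g \<times> bool) list"

definition winv :: "'g word \<Rightarrow> 'g word" where
  "winv w = rev (map (\<lambda>(g, b). (g, \<not> b)) w)"

inductive pres_eq :: "'g word set \<Rightarrow> 'g word \<Rightarrow> 'g word \<Rightarrow> bool" for R where
  refl: "pres_eq R w w"
| sym: "pres_eq R u v \<Longrightarrow> pres_eq R v u"
| trans: "pres_eq R u v \<Longrightarrow> pres_eq R v w \<Longrightarrow> pres_eq R u w"
| cancel: "pres_eq R (u @ [(g, b), (g, \<not> b)] @ v) (u @ v)"
| relator: "r \<in> R \<Longrightarrow> pres_eq R (u @ r @ v) (u @ v)"

definition pclass :: "'g word set \<Rightarrow> 'g word \<Rightarrow> 'g word set" where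
  "pclass R w = {v. pres_eq R w v}"

definition presented_group :: "'g set \<Rightarrow> 'g word set \<Rightarrow> ('g word set) monoid" where
  "presented_group S R =
     \<lparr> carrier = {pclass R w | w. set w \<subseteq> S \<times> UNIV},
       monoid.mult = (\<lambda>P Q. pclass R ((SOME p. p \<in> P) @ (SOME q. q \<in> Q))),
       monoid.one = pclass R [] \<rparr>"

datatype kgen = GA | GB | GS nat

abbreviation (input) la :: "kgen word" where "la \<equiv> [(GA, False)]"
abbreviation (input) lai :: "kgen word" where "lai \<equiv> [(GA, True)]"
abbreviation (input) lb :: "kgen word" where "lb \<equiv> [(GB, False)]"
abbreviation (input) lbi :: "kgen word" where "lbi \<equiv> [(GB, True)]"
abbreviation (input) ls :: "nat \<Rightarrow> kgen word" where "ls i \<equiv> [(GS i, False)]"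
abbreviation (input) lsi :: "nat \<Rightarrow> kgen word" where "lsi i \<equiv> [(GS i, True)]"

text \<open>The relation u = v as the relator u v^{-1}.\<close>
definition eqrel :: "'g word \<Rightarrow> 'g word \<Rightarrow> 'g word" where
  "eqrel u v = u @ winv v"

definition kgens :: "nat \<Rightarrow> kgen set" where
  "kgens n = {GA, GB} \<union> {GS i | i. 1 \<le> i \<and> i \<le> n - 1}"

definition krels :: "nat \<Rightarrow> kgen word set" where
  "krels n =
     {eqrel (ls i @ ls (i+1) @ ls i) (ls (i+1) @ ls i @ ls (i+1)) | i. 1 \<le> i \<and> i \<le> n - 2}
   \<union> {eqrel (ls j @ ls i) (ls i @ ls j) | i j. 1 \<le> i \<and> i \<le> n - 1 \<and> 1 \<le> j \<and> j \<le> n - 1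
         \<and> (i + 2 \<le> j \<or> j + 2 \<le> i)}
   \<union> {eqrel (la @ ls j) (ls j @ la) | j. 2 \<le> j \<and> j \<le> n - 1}
   \<union> {eqrel (lb @ ls j) (ls j @ lb) | j. 2 \<le> j \<and> j \<le> n - 1}
   \<union> {eqrel (lbi @ ls 1 @ la) (ls 1 @ la @ ls 1 @ lbi @ ls 1),
      eqrel (la @ ls 1 @ la @ ls 1) (ls 1 @ la @ ls 1 @ la),
      eqrel (lb @ lsi 1 @ lb @ ls 1) (lsi 1 @ lb @ lsi 1 @ lb),
      eqrel (concat (map ls [1..<n]) @ rev (concat (map ls [1..<n])))
            (lb @ lai @ lbi @ lai)}"

definition braid_K :: "nat \<Rightarrow> (kgen word set) monoid" where
  "braid_K n = presented_group (kgens n) (krels n)"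

definition sigma_K :: "nat \<Rightarrow> nat \<Rightarrow> kgen word set" where
  "sigma_K n i = pclass (krels n) (ls i)"

definition comm_subgroup :: "('a, 'b) monoid_scheme \<Rightarrow> 'a set \<Rightarrow> 'a set \<Rightarrow> 'a set" where
  "comm_subgroup G H K =
     generate G {h \<otimes>\<^bsub>G\<^esub> k \<otimes>\<^bsub>G\<^esub> inv\<^bsub>G\<^esub> h \<otimes>\<^bsub>G\<^esub> inv\<^bsub>G\<^esub> k | h k. h \<in> H \<and> k \<in> K}"

primrec lcs :: "('a, 'b) monoid_scheme \<Rightarrow> nat \<Rightarrow> 'a set" where
  "lcs G 0 = carrier G"
| "lcs G (Suc i) = comm_subgroup G (lcs G i) (carrier G)"

text \<open>Gamma_i with the paper's indexing: Gamma_1 = G, Gamma_{i+1} = [Gamma_i, G].\<close>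
definition Gamma :: "('a, 'b) monoid_scheme \<Rightarrow> nat \<Rightarrow> 'a set" where
  "Gamma G i = lcs G (i - 1)"

definition normal_closure :: "('a, 'b) monoid_scheme \<Rightarrow> 'a set \<Rightarrow> 'a set" where
  "normal_closure G Y = generate G {u \<otimes>\<^bsub>G\<^esub> y \<otimes>\<^bsub>G\<^esub> inv\<^bsub>G\<^esub> u | u y. u \<in> carrier G \<and> y \<in> Y}"

definition residually_nilpotent :: "('a, 'b) monoid_scheme \<Rightarrow> bool" where
  "residually_nilpotent G \<longleftrightarrow> (\<Inter>i\<in>{1..}. Gamma G i) = {one G}"

end

theory Submission
  imports Defs
begin

text \<open>Write \<open>c = \<sigma>\<^sub>2\<inverse> \<sigma>\<^sub>1\<close> and let \<open>N\<close> be its normal closure. The braid relation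
  between \<open>\<sigma>\<^sub>1\<close> and \<open>\<sigma>\<^sub>2\<close> alone puts \<open>c\<close>, hence \<open>N\<close>, into \<open>\<Gamma>\<^sub>3\<close>. Conversely, in any
  quotient in which \<open>\<sigma>\<^sub>1 = \<sigma>\<^sub>2\<close> the braid and commutation relations identify all
  \<open>\<sigma>\<^sub>i\<close>, and the two relations involving \<open>a\<close> and \<open>b\<close> then force \<open>a b = b a\<close>; so
  \<open>B\<^sub>n(\<bbbK>)/N\<close> is abelian and \<open>\<Gamma>\<^sub>2 \<subseteq> N \<subseteq> \<Gamma>\<^sub>3 \<subseteq> \<Gamma>\<^sub>2\<close>, after which the lower central
  series is constant. Finally \<open>c \<noteq> 1\<close>: sending \<open>\<sigma>\<^sub>i\<close> to the transposition \<open>(i i+1)\<close>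
  and \<open>a\<close>, \<open>b\<close> to the identity respects every relation and maps \<open>c\<close> to a 3-cycle.\<close>

section \<open>Presented groups\<close>

lemma pres_eq_append_cong:
  "pres_eq R u v \<Longrightarrow> pres_eq R (x @ u @ y) (x @ v @ y)"
proof (induction rule: pres_eq.induct)
  case (trans u v w)
  then show ?case by (metis pres_eq.trans)
next
  case (cancel u g b v)
  then show ?case using pres_eq.cancel[of R "x @ u" g b "v @ y"] by simp
next
  case (relator r u v)
  then show ?case using pres_eq.relator[of r R "x @ u" "v @ y"] by simp
qed (auto intro: pres_eq.refl pres_eq.sym)

lemma pres_eq_append:
  "pres_eq R u u' \<Longrightarrow> pres_eq R v v' \<Longrightarrow> pres_eq R (u @ v) (u' @ v')"
  using pres_eq_append_cong[of R u u' "[]" v] pres_eq_append_cong[of R v v' u' "[]"]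
  by (metis append.right_neutral append_Nil pres_eq.trans)

lemma pres_eq_winv_append: "pres_eq R (winv w @ w) []"
proof (induction w)
  case Nil
  then show ?case by (simp add: winv_def pres_eq.refl)
next
  case (Cons l w)
  obtain g b where l: "l = (g, b)" by fastforce
  have "pres_eq R (winv w @ [(g, \<not> b), (g, \<not>\<not> b)] @ w) (winv w @ w)"
    by (rule pres_eq.cancel)
  moreover have "winv (l # w) @ l # w = winv w @ [(g, \<not> b), (g, \<not>\<not> b)] @ w"
    by (simp add: winv_def l)
  ultimately show ?case using Cons by (metis pres_eq.trans)
qed

lemma pclass_eq_iff: "pclass R u = pclass R v \<longleftrightarrow> pres_eq R u v"
proof
  assume "pclass R u = pclass R v"
  then show "pres_eq R u v" by (simp add: pclass_def set_eq_iff pres_eq.refl)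
next
  assume "pres_eq R u v"
  then show "pclass R u = pclass R v"
    unfolding pclass_def by (auto intro: pres_eq.trans pres_eq.sym)
qed

lemma pres_eq_some_pclass: "pres_eq R w (SOME v. v \<in> pclass R w)"
proof -
  have "w \<in> pclass R w" by (simp add: pclass_def pres_eq.refl)
  then have "(SOME v. v \<in> pclass R w) \<in> pclass R w" by (rule someI)
  then show ?thesis by (simp add: pclass_def)
qed

lemma presented_group_mult:
  "pclass R u \<otimes>\<^bsub>presented_group S R\<^esub> pclass R v = pclass R (u @ v)"
  unfolding presented_group_def
  by (simp add: pclass_eq_iff) (metis pres_eq_append pres_eq_some_pclass pres_eq.sym)

lemma presented_group_one: "\<one>\<^bsub>presented_group S R\<^esub> = pclass R []"
  by (simp add: presented_group_def)

lemma carrier_presented_group: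
  "carrier (presented_group S R) = {pclass R w | w. set w \<subseteq> S \<times> UNIV}"
  by (simp add: presented_group_def)

lemma group_presented_group: "group (presented_group S R)"
proof (rule groupI)
  fix x y
  assume "x \<in> carrier (presented_group S R)" "y \<in> carrier (presented_group S R)"
  then show "x \<otimes>\<^bsub>presented_group S R\<^esub> y \<in> carrier (presented_group S R)"
    by (auto simp: carrier_presented_group presented_group_mult) (metis Un_subset_iff set_append)
next
  fix x assume "x \<in> carrier (presented_group S R)"
  then obtain w where w: "x = pclass R w" "set w \<subseteq> S \<times> UNIV"
    by (auto simp: carrier_presented_group)
  have "set (winv w) \<subseteq> S \<times> UNIV"
    using w(2) by (auto simp: winv_def)
  moreover have "pclass R (winv w) \<otimes>\<^bsub>presented_group S R\<^esub> x = \<one>\<^bsub>presented_group S R\<^esub>"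
    by (simp add: w presented_group_mult presented_group_one pclass_eq_iff pres_eq_winv_append)
  ultimately show "\<exists>y\<in>carrier (presented_group S R). y \<otimes>\<^bsub>presented_group S R\<^esub> x = \<one>\<^bsub>presented_group S R\<^esub>"
    by (auto simp: carrier_presented_group)
qed (auto simp: carrier_presented_group presented_group_mult presented_group_one)

lemma pclass_letter_closed:
  "g \<in> S \<Longrightarrow> pclass R [(g, b)] \<in> carrier (presented_group S R)"
  by (auto simp: carrier_presented_group intro!: exI[of _ "[(g, b)]"])

lemma pclass_inverse_letter:
  assumes "g \<in> S"
  shows "pclass R [(g, True)] = inv\<^bsub>presented_group S R\<^esub> pclass R [(g, False)]"
proof -
  interpret group "presented_group S R" by (rule group_presented_group)
  have "pclass R [(g, True)] \<otimes>\<^bsub>presented_group S R\<^esub> pclass R [(g, False)] = \<one>\<^bsub>presented_group S R\<^esub>"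
    using pres_eq.cancel[of R "[]" g True "[]"]
    by (simp add: presented_group_mult presented_group_one pclass_eq_iff)
  then show ?thesis
    using inv_equality pclass_letter_closed[OF assms] by metis
qed

lemma pclass_eqrel:
  assumes "eqrel u v \<in> R"
  shows "pclass R u = pclass R v"
proof -
  have "pres_eq R ((u @ winv v) @ v) v"
    using pres_eq_append[OF pres_eq.relator[of "eqrel u v" R "[]" "[]"] pres_eq.refl[of R v]] assms
    by (simp add: eqrel_def)
  moreover have "pres_eq R (u @ winv v @ v) u"
    using pres_eq_append[OF pres_eq.refl[of R u] pres_eq_winv_append[of R v]] by simp
  ultimately show ?thesis
    by (simp add: pclass_eq_iff) (metis pres_eq.sym pres_eq.trans)
qed

lemma presented_group_generate:
  "carrier (presented_group S R) = generate (presented_group S R) ((\<lambda>g. pclass R [(g, False)]) ` S)"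
    (is "carrier ?P = generate ?P ?T")
proof
  interpret group ?P by (rule group_presented_group)
  show "generate ?P ?T \<subseteq> carrier ?P"
    by (rule generate_incl) (auto intro: pclass_letter_closed)
  have "pclass R w \<in> generate ?P ?T" if "set w \<subseteq> S \<times> UNIV" for w
    using that
  proof (induction w)
    case Nil
    then show ?case using generate.one presented_group_one by metis
  next
    case (Cons l w)
    obtain g b where l: "l = (g, b)" and g: "g \<in> S" using Cons.prems by fastforce
    have "pclass R [l] \<in> generate ?P ?T"
      using generate.incl[of "pclass R [(g, False)]" ?T] generate.inv[of "pclass R [(g, False)]" ?T]
        pclass_inverse_letter[OF g, of R] g l
      by (cases b) auto
    moreover have "pclass R w \<in> generate ?P ?T" using Cons by auto
    ultimately show ?case
      using presented_group_mult[where u="[l]" and v=w] generate.eng by fastforce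
  qed
  then show "carrier ?P \<subseteq> generate ?P ?T"
    by (auto simp: carrier_presented_group)
qed

text \<open>Meant for actions in which every generator is an involution: the inverse flag of a
  letter is ignored.\<close>
primrec word_action :: "('g \<Rightarrow> 'x \<Rightarrow> 'x) \<Rightarrow> 'g word \<Rightarrow> 'x \<Rightarrow> 'x" where
  "word_action \<rho> [] = id"
| "word_action \<rho> (l # w) = \<rho> (fst l) \<circ> word_action \<rho> w"

lemma word_action_append: "word_action \<rho> (u @ v) = word_action \<rho> u \<circ> word_action \<rho> v"
  by (induction u) (auto simp: comp_assoc)

context
  fixes \<rho> :: "'g \<Rightarrow> 'x \<Rightarrow> 'x"
  assumes involution: "\<And>g. \<rho> g \<circ> \<rho> g = id"
begin

lemma word_action_append_rev: "word_action \<rho> (w @ rev w) = id"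
proof (induction w)
  case (Cons l w)
  have "word_action \<rho> ((l # w) @ rev (l # w)) = \<rho> (fst l) \<circ> word_action \<rho> (w @ rev w) \<circ> \<rho> (fst l)"
    by (simp add: word_action_append comp_assoc)
  also have "\<dots> = id"
    by (simp only: Cons.IH comp_id involution)
  finally show ?case .
qed simp

lemma word_action_eqrel:
  assumes "word_action \<rho> u = word_action \<rho> v"
  shows "word_action \<rho> (eqrel u v) = id"
proof -
  have "word_action \<rho> (winv v) = word_action \<rho> (rev v)"
    by (induction v) (auto simp: winv_def word_action_append split_def)
  then show ?thesis
    using word_action_append_rev[of v] assms by (simp add: eqrel_def word_action_append)
qed

lemma word_action_pres_eq:
  assumes "pres_eq R u v" and "\<And>r. r \<in> R \<Longrightarrow> word_action \<rho> r = id"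
  shows "word_action \<rho> u = word_action \<rho> v"
  using assms
proof (induction rule: pres_eq.induct)
  case (cancel u g b v)
  show ?case using involution[of g] by (simp add: word_action_append comp_assoc[symmetric])
qed (simp_all add: word_action_append)

end

section \<open>Lower central series and normal closures\<close>

context group
begin

lemma m_inv_cancel_left [simp]: "x \<in> carrier G \<Longrightarrow> y \<in> carrier G \<Longrightarrow> x \<otimes> (inv x \<otimes> y) = y"
  by (simp add: m_assoc[symmetric])

lemma inv_m_cancel_left [simp]: "x \<in> carrier G \<Longrightarrow> y \<in> carrier G \<Longrightarrow> inv x \<otimes> (x \<otimes> y) = y"
  by (simp add: m_assoc[symmetric])

lemma inv_commute:
  assumes x: "x \<in> carrier G" and y: "y \<in> carrier G" and xy: "x \<otimes> y = y \<otimes> x"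
  shows "inv x \<otimes> y = y \<otimes> inv x"
proof -
  have "inv x \<otimes> y = inv x \<otimes> (y \<otimes> x) \<otimes> inv x" using x y by (simp add: m_assoc)
  also have "\<dots> = inv x \<otimes> (x \<otimes> y) \<otimes> inv x" by (simp add: xy)
  also have "\<dots> = y \<otimes> inv x" using x y by simp
  finally show ?thesis .
qed

lemma comm_subgroup_normal:
  assumes "H \<lhd> G" and "K \<lhd> G"
  shows "comm_subgroup G H K \<lhd> G"
  unfolding comm_subgroup_def
proof (rule normal_generateI)
  interpret H: normal H G by (rule assms(1))
  interpret K: normal K G by (rule assms(2))
  show "{h \<otimes> k \<otimes> inv h \<otimes> inv k |h k. h \<in> H \<and> k \<in> K} \<subseteq> carrier G"
    using H.subset K.subset by auto
  fix x g
  assume "x \<in> {h \<otimes> k \<otimes> inv h \<otimes> inv k |h k. h \<in> H \<and> k \<in> K}" and g: "g \<in> carrier G"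
  then obtain h k where x: "x = h \<otimes> k \<otimes> inv h \<otimes> inv k" and hk: "h \<in> H" "k \<in> K"
    by blast
  have hkC: "h \<in> carrier G" "k \<in> carrier G" using hk H.subset K.subset by auto
  have "g \<otimes> x \<otimes> inv g =
      (g \<otimes> h \<otimes> inv g) \<otimes> (g \<otimes> k \<otimes> inv g) \<otimes> inv (g \<otimes> h \<otimes> inv g) \<otimes> inv (g \<otimes> k \<otimes> inv g)"
    using g hkC by (simp add: x m_assoc inv_mult_group)
  then show "g \<otimes> x \<otimes> inv g \<in> {h \<otimes> k \<otimes> inv h \<otimes> inv k |h k. h \<in> H \<and> k \<in> K}"
    using H.inv_op_closed2[OF g hk(1)] K.inv_op_closed2[OF g hk(2)] by blast
qed

lemma lcs_normal: "lcs G i \<lhd> G"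
  by (induction i) (simp_all add: normal_self comm_subgroup_normal)

lemma lcs_subgroup: "subgroup (lcs G i) G"
  using lcs_normal by (rule normal_imp_subgroup)

lemma commutator_in_lcs:
  "h \<in> lcs G i \<Longrightarrow> k \<in> carrier G \<Longrightarrow> h \<otimes> k \<otimes> inv h \<otimes> inv k \<in> lcs G (Suc i)"
  by (auto simp: comm_subgroup_def intro!: generate.incl)

lemma comm_subgroup_mono:
  "H \<subseteq> H' \<Longrightarrow> comm_subgroup G H K \<subseteq> comm_subgroup G H' K"
  unfolding comm_subgroup_def by (rule mono_generate) blast

lemma lcs_Suc_subset: "lcs G (Suc i) \<subseteq> lcs G i"
proof (induction i)
  case 0
  show ?case using subgroup.subset[OF lcs_subgroup[of 1]] by simp
next
  case (Suc i)
  then show ?case by (simp add: comm_subgroup_mono)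
qed

lemma lcs_antimono: "i \<le> j \<Longrightarrow> lcs G j \<subseteq> lcs G i"
  by (induction j rule: dec_induct) (use lcs_Suc_subset in blast)+

lemma lcs_eq_if_Suc_eq:
  assumes "lcs G (Suc i) = lcs G i" and "i \<le> k"
  shows "lcs G k = lcs G i"
  using assms(2)
proof (induction k rule: dec_induct)
  case (step k)
  then show ?case using assms(1) by simp
qed simp

text \<open>By the braid relation \<open>c = s2\<inverse> s1\<close> is the commutator of \<open>s1 s2\<close> and \<open>s1\<inverse>\<close>, and
  \<open>c = [c, s2]\<inverse> [c, s2\<^sup>2]\<close>, which puts it in the third term of the lower central series.\<close>
lemma braid_inv_mult_in_lcs:
  assumes s1: "s1 \<in> carrier G" and s2: "s2 \<in> carrier G"
    and braid: "s1 \<otimes> (s2 \<otimes> s1) = s2 \<otimes> (s1 \<otimes> s2)"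
  shows "inv s2 \<otimes> s1 \<in> lcs G 2"
proof -
  have braid': "s2 \<otimes> (s1 \<otimes> (s2 \<otimes> x)) = s1 \<otimes> (s2 \<otimes> (s1 \<otimes> x))" if "x \<in> carrier G" for x
    using braid that s1 s2 by (metis m_assoc m_closed)
  define c where "c = inv s2 \<otimes> s1"
  have cC: "c \<in> carrier G" using s1 s2 by (simp add: c_def)
  have "s2 \<otimes> c = s2 \<otimes> ((s1 \<otimes> s2) \<otimes> inv s1 \<otimes> inv (s1 \<otimes> s2) \<otimes> inv (inv s1))"
    using s1 s2 by (simp add: c_def m_assoc inv_mult_group braid')
  then have "c = (s1 \<otimes> s2) \<otimes> inv s1 \<otimes> inv (s1 \<otimes> s2) \<otimes> inv (inv s1)"
    using s1 s2 cC by (metis l_cancel m_closed inv_closed)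
  then have c1: "c \<in> lcs G 1"
    using s1 s2 commutator_in_lcs[of "s1 \<otimes> s2" 0 "inv s1"] by simp
  have "s2 \<otimes> c = s2 \<otimes> (inv (c \<otimes> s2 \<otimes> inv c \<otimes> inv s2) \<otimes> (c \<otimes> (s2 \<otimes> s2) \<otimes> inv c \<otimes> inv (s2 \<otimes> s2)))"
    using s1 s2 by (simp add: c_def m_assoc inv_mult_group braid')
  then have c_eq: "c = inv (c \<otimes> s2 \<otimes> inv c \<otimes> inv s2) \<otimes> (c \<otimes> (s2 \<otimes> s2) \<otimes> inv c \<otimes> inv (s2 \<otimes> s2))"
    using s1 s2 cC by (metis l_cancel m_closed inv_closed)
  have "c \<otimes> s2 \<otimes> inv c \<otimes> inv s2 \<in> lcs G 2"
    using commutator_in_lcs[OF c1 s2] by (simp add: numeral_2_eq_2)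
  moreover have "c \<otimes> (s2 \<otimes> s2) \<otimes> inv c \<otimes> inv (s2 \<otimes> s2) \<in> lcs G 2"
    using commutator_in_lcs[OF c1, of "s2 \<otimes> s2"] s2 by (simp add: numeral_2_eq_2)
  ultimately have "c \<in> lcs G 2"
    by (subst c_eq) (simp add: subgroup.m_closed subgroup.m_inv_closed lcs_subgroup)
  then show ?thesis by (simp add: c_def)
qed

lemma normal_closure_normal:
  assumes "Y \<subseteq> carrier G"
  shows "normal_closure G Y \<lhd> G"
  unfolding normal_closure_def
proof (rule normal_generateI)
  show "{u \<otimes> y \<otimes> inv u |u y. u \<in> carrier G \<and> y \<in> Y} \<subseteq> carrier G" using assms by auto
  fix x g
  assume "x \<in> {u \<otimes> y \<otimes> inv u |u y. u \<in> carrier G \<and> y \<in> Y}" and g: "g \<in> carrier G"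
  then obtain u y where x: "x = u \<otimes> y \<otimes> inv u" and u: "u \<in> carrier G" and y: "y \<in> Y"
    by blast
  have "g \<otimes> x \<otimes> inv g = (g \<otimes> u) \<otimes> y \<otimes> inv (g \<otimes> u)"
    using x u y g assms by (auto simp: m_assoc inv_mult_group)
  then show "g \<otimes> x \<otimes> inv g \<in> {u \<otimes> y \<otimes> inv u |u y. u \<in> carrier G \<and> y \<in> Y}"
    using u g y by blast
qed

lemma subset_normal_closure:
  assumes "Y \<subseteq> carrier G"
  shows "Y \<subseteq> normal_closure G Y"
proof
  fix y assume y: "y \<in> Y"
  then have "y = \<one> \<otimes> y \<otimes> inv \<one>" using assms by auto
  then show "y \<in> normal_closure G Y"
    unfolding normal_closure_def using y by (blast intro: generate.incl)
qed

lemma normal_closure_subset: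
  assumes "N \<lhd> G" and "Y \<subseteq> N"
  shows "normal_closure G Y \<subseteq> N"
  unfolding normal_closure_def
proof (rule generate_subgroup_incl[OF _ normal_imp_subgroup[OF assms(1)]])
  show "{u \<otimes> y \<otimes> inv u |u y. u \<in> carrier G \<and> y \<in> Y} \<subseteq> N"
    using assms normal.inv_op_closed2[OF assms(1)] by auto
qed

end

lemma (in normal) kernel_r_coset: "kernel G (G Mod H) (\<lambda>a. H #> a) = H"
proof
  show "kernel G (G Mod H) (\<lambda>a. H #> a) \<subseteq> H"
    unfolding kernel_def using coset_join1[OF _ _ subgroup_axioms] by auto
  show "H \<subseteq> kernel G (G Mod H) (\<lambda>a. H #> a)"
    unfolding kernel_def using coset_join2[OF _ subgroup_axioms] subset by auto
qed

lemma (in group_hom) images_commute_if_generators_commute: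
  assumes T: "T \<subseteq> carrier G" and gen: "carrier G = generate G T"
    and comm: "\<And>t u. t \<in> T \<Longrightarrow> u \<in> T \<Longrightarrow> h t \<otimes>\<^bsub>H\<^esub> h u = h u \<otimes>\<^bsub>H\<^esub> h t"
    and x: "x \<in> carrier G" and y: "y \<in> carrier G"
  shows "h x \<otimes>\<^bsub>H\<^esub> h y = h y \<otimes>\<^bsub>H\<^esub> h x"
proof -
  have comm_generated: "h x \<otimes>\<^bsub>H\<^esub> z = z \<otimes>\<^bsub>H\<^esub> h x"
    if z: "z \<in> carrier H" and zT: "\<And>t. t \<in> T \<Longrightarrow> h t \<otimes>\<^bsub>H\<^esub> z = z \<otimes>\<^bsub>H\<^esub> h t"
      and x: "x \<in> generate G T" for x z
    using x
  proof (induction rule: generate.induct)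
    case (inv t)
    have "inv\<^bsub>H\<^esub> (h t) \<otimes>\<^bsub>H\<^esub> z = z \<otimes>\<^bsub>H\<^esub> inv\<^bsub>H\<^esub> (h t)"
      using H.inv_commute zT[OF inv] T inv z by auto
    then show ?case using T inv by auto
  next
    case (eng x1 x2)
    have "x1 \<in> carrier G" "x2 \<in> carrier G" using eng.hyps T G.generate_incl by blast+
    then have "h (x1 \<otimes>\<^bsub>G\<^esub> x2) \<otimes>\<^bsub>H\<^esub> z = h x1 \<otimes>\<^bsub>H\<^esub> (z \<otimes>\<^bsub>H\<^esub> h x2)"
      using eng.IH z by (simp add: H.m_assoc)
    also have "\<dots> = z \<otimes>\<^bsub>H\<^esub> h (x1 \<otimes>\<^bsub>G\<^esub> x2)"
      using eng.IH z \<open>x1 \<in> carrier G\<close> \<open>x2 \<in> carrier G\<close> by (simp add: H.m_assoc[symmetric])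
    finally show ?case .
  qed (use z zT in auto)
  have "h x \<otimes>\<^bsub>H\<^esub> h t = h t \<otimes>\<^bsub>H\<^esub> h x" if "t \<in> T" for t
    using comm_generated[of "h t" x] x gen comm that T by auto
  then show ?thesis
    using comm_generated[of "h x" y] x y gen by auto
qed

lemma (in group_hom) lcs_one_subset_kernel_if_generators_commute:
  assumes T: "T \<subseteq> carrier G" and gen: "carrier G = generate G T"
    and comm: "\<And>t u. t \<in> T \<Longrightarrow> u \<in> T \<Longrightarrow> h t \<otimes>\<^bsub>H\<^esub> h u = h u \<otimes>\<^bsub>H\<^esub> h t"
  shows "lcs G 1 \<subseteq> kernel G H h"
proof -
  have "x \<otimes>\<^bsub>G\<^esub> y \<otimes>\<^bsub>G\<^esub> inv\<^bsub>G\<^esub> x \<otimes>\<^bsub>G\<^esub> inv\<^bsub>G\<^esub> y \<in> kernel G H h"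
    if x: "x \<in> carrier G" and y: "y \<in> carrier G" for x y
  proof -
    have "h x \<otimes>\<^bsub>H\<^esub> h y \<otimes>\<^bsub>H\<^esub> inv\<^bsub>H\<^esub> h x \<otimes>\<^bsub>H\<^esub> inv\<^bsub>H\<^esub> h y = \<one>\<^bsub>H\<^esub>"
      using images_commute_if_generators_commute[OF T gen comm x y] x y
      by (simp add: H.m_assoc)
    then show ?thesis using x y by (simp add: kernel_def)
  qed
  then have "{x \<otimes>\<^bsub>G\<^esub> y \<otimes>\<^bsub>G\<^esub> inv\<^bsub>G\<^esub> x \<otimes>\<^bsub>G\<^esub> inv\<^bsub>G\<^esub> y | x y. x \<in> carrier G \<and> y \<in> carrier G}
      \<subseteq> kernel G H h"
    by blast
  then show ?thesis
    by (simp add: comm_subgroup_def G.generate_subgroup_incl subgroup_kernel)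
qed

context group
begin

text \<open>Once \<open>s j = s (j + 1)\<close>, the relation \<open>s j s (j + 2) = s (j + 2) s j\<close> turns the braid
  relation between \<open>s (j + 1)\<close> and \<open>s (j + 2)\<close> into \<open>s (j + 1) = s (j + 2)\<close>.\<close>
lemma braid_generators_eq_if_first_two_eq:
  fixes s :: "nat \<Rightarrow> 'a" and m i :: nat
  assumes carrier: "\<And>i. 1 \<le> i \<Longrightarrow> i \<le> m \<Longrightarrow> s i \<in> carrier G"
    and braid: "\<And>i. 1 \<le> i \<Longrightarrow> i + 1 \<le> m \<Longrightarrow> s i \<otimes> (s (i + 1) \<otimes> s i) = s (i + 1) \<otimes> (s i \<otimes> s (i + 1))"
    and far_comm: "\<And>i. 1 \<le> i \<Longrightarrow> i + 2 \<le> m \<Longrightarrow> s (i + 2) \<otimes> s i = s i \<otimes> s (i + 2)"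
    and s12: "s 1 = s 2"
  shows "1 \<le> i \<Longrightarrow> i \<le> m \<Longrightarrow> s i = s 1"
proof (induction i rule: less_induct)
  case (less i)
  show ?case
  proof (cases "i \<le> 2")
    case True
    then have "i = 1 \<or> i = 2" using less.prems by auto
    then show ?thesis using s12 by auto
  next
    case False
    define j where "j = i - 2"
    have i: "i = j + 2" and j: "1 \<le> j" using False by (auto simp: j_def)
    have sj: "s j = s 1" and sj1: "s (j + 1) = s 1"
      using less.IH[of j] less.IH[of "j + 1"] i j less.prems by auto
    have carr: "s (j + 1) \<in> carrier G" "s (j + 2) \<in> carrier G"
      using carrier i j less.prems by auto
    have "s (j + 1) \<otimes> (s (j + 1) \<otimes> s (j + 2)) = s (j + 1) \<otimes> (s (j + 2) \<otimes> s (j + 1))"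
      using far_comm[of j] i j less.prems sj sj1 by simp
    also have "\<dots> = s (j + 2) \<otimes> (s (j + 1) \<otimes> s (j + 2))"
      using braid[of "j + 1"] i j less.prems by (simp add: add.assoc)
    finally have "s (j + 1) = s (j + 2)"
      using carr by (simp add: m_assoc[symmetric])
    then show ?thesis using i sj1 by simp
  qed
qed

text \<open>The relation for \<open>b\<close> forces \<open>s\<^sup>2 = 1\<close>, and then the mixed relation says that
  \<open>b\<inverse>\<close> commutes with \<open>a\<close>.\<close>
lemma commute_if_klein_relations:
  assumes sC: "s \<in> carrier G" and aC: "a \<in> carrier G" and bC: "b \<in> carrier G"
    and bs: "b \<otimes> s = s \<otimes> b"
    and mixed: "inv b \<otimes> (s \<otimes> a) = s \<otimes> (a \<otimes> (s \<otimes> (inv b \<otimes> s)))"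
    and b_rel: "b \<otimes> (inv s \<otimes> (b \<otimes> s)) = inv s \<otimes> (b \<otimes> (inv s \<otimes> b))"
  shows "a \<otimes> b = b \<otimes> a"
proof -
  have b_inv_s: "inv b \<otimes> s = s \<otimes> inv b" using inv_commute[OF bC sC bs] .
  have inv_s_b: "inv s \<otimes> b = b \<otimes> inv s" using inv_commute[OF sC bC bs[symmetric]] .
  have "b \<otimes> b = b \<otimes> (inv s \<otimes> (b \<otimes> s))" using sC bC by (simp add: bs)
  also have "\<dots> = inv s \<otimes> (b \<otimes> (inv s \<otimes> b))" by (rule b_rel)
  also have "\<dots> = inv s \<otimes> ((b \<otimes> inv s) \<otimes> b)" using sC bC by (simp add: m_assoc)
  also have "\<dots> = inv s \<otimes> (inv s \<otimes> (b \<otimes> b))" using sC bC by (simp only: inv_s_b[symmetric]) (simp add: m_assoc)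
  finally have "s \<otimes> (s \<otimes> (b \<otimes> b)) = s \<otimes> (s \<otimes> (inv s \<otimes> (inv s \<otimes> (b \<otimes> b))))"
    by (rule arg_cong)
  then have "s \<otimes> s \<otimes> (b \<otimes> b) = \<one> \<otimes> (b \<otimes> b)" using sC bC by (simp add: m_assoc)
  then have ss: "s \<otimes> s = \<one>" using sC bC by simp
  have "s \<otimes> (inv b \<otimes> a) = inv b \<otimes> (s \<otimes> a)"
    using sC aC bC by (simp add: b_inv_s m_assoc[symmetric])
  also have "\<dots> = s \<otimes> (a \<otimes> ((s \<otimes> s) \<otimes> inv b))"
    using sC aC bC by (simp add: mixed b_inv_s m_assoc)
  also have "\<dots> = s \<otimes> (a \<otimes> inv b)" using ss bC by simp
  finally have "inv b \<otimes> a = a \<otimes> inv b" using sC aC bC by simp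
  from inv_commute[OF _ aC this] bC show ?thesis by simp
qed

end

section \<open>The braid group of the Klein bottle\<close>

definition a_K :: "nat \<Rightarrow> kgen word set" where
  "a_K n = pclass (krels n) la"

definition b_K :: "nat \<Rightarrow> kgen word set" where
  "b_K n = pclass (krels n) lb"

lemma group_braid_K: "group (braid_K n)"
  unfolding braid_K_def by (rule group_presented_group)

lemma kgens_GS_iff [simp]: "GS i \<in> kgens n \<longleftrightarrow> 1 \<le> i \<and> i \<le> n - 1"
  by (auto simp: kgens_def)

lemma kgens_GA [simp]: "GA \<in> kgens n" and kgens_GB [simp]: "GB \<in> kgens n"
  by (simp_all add: kgens_def)

lemma pclass_krels_closed:
  "set w \<subseteq> kgens n \<times> UNIV \<Longrightarrow> pclass (krels n) w \<in> carrier (braid_K n)"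
  by (auto simp: braid_K_def carrier_presented_group)

lemma carrier_braid_K_generate:
  "carrier (braid_K n) = generate (braid_K n) (insert (a_K n) (insert (b_K n) (sigma_K n ` {1..n - 1})))"
proof -
  have "(\<lambda>g. pclass (krels n) [(g, False)]) ` kgens n = insert (a_K n) (insert (b_K n) (sigma_K n ` {1..n - 1}))"
    by (auto simp: kgens_def a_K_def b_K_def sigma_K_def)
  then show ?thesis
    using presented_group_generate[of "kgens n" "krels n"] by (simp add: braid_K_def)
qed

lemma relators_in_krels:
  assumes "n \<ge> 3"
  shows "\<And>i. 1 \<le> i \<Longrightarrow> i + 1 \<le> n - 1 \<Longrightarrow>
           eqrel (ls i @ ls (i + 1) @ ls i) (ls (i + 1) @ ls i @ ls (i + 1)) \<in> krels n"
    and "\<And>i. 1 \<le> i \<Longrightarrow> i + 2 \<le> n - 1 \<Longrightarrow> eqrel (ls (i + 2) @ ls i) (ls i @ ls (i + 2)) \<in> krels n"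
    and "eqrel (la @ ls 2) (ls 2 @ la) \<in> krels n"
    and "eqrel (lb @ ls 2) (ls 2 @ lb) \<in> krels n"
    and "eqrel (lbi @ ls 1 @ la) (ls 1 @ la @ ls 1 @ lbi @ ls 1) \<in> krels n"
    and "eqrel (lb @ lsi 1 @ lb @ ls 1) (lsi 1 @ lb @ lsi 1 @ lb) \<in> krels n"
proof -
  show "eqrel (ls i @ ls (i + 1) @ ls i) (ls (i + 1) @ ls i @ ls (i + 1)) \<in> krels n"
    if "1 \<le> i" "i + 1 \<le> n - 1" for i
    unfolding krels_def
    by (rule UnI1, rule UnI1, rule UnI1, rule UnI1, intro CollectI exI[of _ i] conjI refl) (use that in auto)
  show "eqrel (ls (i + 2) @ ls i) (ls i @ ls (i + 2)) \<in> krels n"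
    if "1 \<le> i" "i + 2 \<le> n - 1" for i
    unfolding krels_def
    by (rule UnI1, rule UnI1, rule UnI1, rule UnI2, intro CollectI exI[of _ i] exI[of _ "i + 2"] conjI refl)
      (use that in auto)
  show "eqrel (la @ ls 2) (ls 2 @ la) \<in> krels n"
    unfolding krels_def
    by (rule UnI1, rule UnI1, rule UnI2, intro CollectI exI[of _ 2] conjI refl) (use assms in auto)
  show "eqrel (lb @ ls 2) (ls 2 @ lb) \<in> krels n"
    unfolding krels_def
    by (rule UnI1, rule UnI2, intro CollectI exI[of _ 2] conjI refl) (use assms in auto)
qed (simp_all add: krels_def)

lemma (in group) braid_K_hom_relations:
  assumes n: "n \<ge> 3" and h: "h \<in> hom (braid_K n) G"
  defines "s \<equiv> \<lambda>i. h (sigma_K n i)" and "a \<equiv> h (a_K n)" and "b \<equiv> h (b_K n)"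
  shows "\<And>i. 1 \<le> i \<Longrightarrow> i + 1 \<le> n - 1 \<Longrightarrow> s i \<otimes> (s (i + 1) \<otimes> s i) = s (i + 1) \<otimes> (s i \<otimes> s (i + 1))"
    and "\<And>i. 1 \<le> i \<Longrightarrow> i + 2 \<le> n - 1 \<Longrightarrow> s (i + 2) \<otimes> s i = s i \<otimes> s (i + 2)"
    and "a \<otimes> s 2 = s 2 \<otimes> a"
    and "b \<otimes> s 2 = s 2 \<otimes> b"
    and "inv b \<otimes> (s 1 \<otimes> a) = s 1 \<otimes> (a \<otimes> (s 1 \<otimes> (inv b \<otimes> s 1)))"
    and "b \<otimes> (inv s 1 \<otimes> (b \<otimes> s 1)) = inv s 1 \<otimes> (b \<otimes> (inv s 1 \<otimes> b))"
proof -
  interpret hom: group_hom "braid_K n" G h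
    by (simp add: group_hom_def group_hom_axioms_def group_braid_K is_group h)
  have split: "h (pclass (krels n) (l # l' # w)) = h (pclass (krels n) [l]) \<otimes> h (pclass (krels n) (l' # w))"
    if "set (l # l' # w) \<subseteq> kgens n \<times> UNIV" for l l' w
  proof -
    have "pclass (krels n) (l # l' # w) = pclass (krels n) [l] \<otimes>\<^bsub>braid_K n\<^esub> pclass (krels n) (l' # w)"
      by (simp add: braid_K_def presented_group_mult)
    then show ?thesis
      using that pclass_krels_closed[of "[l]" n] pclass_krels_closed[of "l' # w" n] by simp
  qed
  have inv_letter: "h (pclass (krels n) [(g, True)]) = inv h (pclass (krels n) [(g, False)])"
    if "g \<in> kgens n" for g
    using that pclass_inverse_letter[OF that, of "krels n", folded braid_K_def]
      pclass_krels_closed[of "[(g, False)]" n]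
    by simp
  note relation = relators_in_krels[OF n, THEN pclass_eqrel, THEN arg_cong[where f = h]]
  note unfold = split inv_letter s_def a_def b_def sigma_K_def a_K_def b_K_def
  show "\<And>i. 1 \<le> i \<Longrightarrow> i + 1 \<le> n - 1 \<Longrightarrow> s i \<otimes> (s (i + 1) \<otimes> s i) = s (i + 1) \<otimes> (s i \<otimes> s (i + 1))"
    using relation(1) by (simp add: unfold)
  show "\<And>i. 1 \<le> i \<Longrightarrow> i + 2 \<le> n - 1 \<Longrightarrow> s (i + 2) \<otimes> s i = s i \<otimes> s (i + 2)"
    using relation(2) by (simp add: unfold)
  show "a \<otimes> s 2 = s 2 \<otimes> a" "b \<otimes> s 2 = s 2 \<otimes> b"
    using relation(3,4) n by (simp_all add: unfold)
  show "inv b \<otimes> (s 1 \<otimes> a) = s 1 \<otimes> (a \<otimes> (s 1 \<otimes> (inv b \<otimes> s 1)))"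
    "b \<otimes> (inv s 1 \<otimes> (b \<otimes> s 1)) = inv s 1 \<otimes> (b \<otimes> (inv s 1 \<otimes> b))"
    using relation(5,6) n by (simp_all add: unfold)
qed

lemma sigma_K_closed: "1 \<le> i \<Longrightarrow> i \<le> n - 1 \<Longrightarrow> sigma_K n i \<in> carrier (braid_K n)"
  by (simp add: sigma_K_def pclass_krels_closed)

lemma a_K_closed: "a_K n \<in> carrier (braid_K n)" and b_K_closed: "b_K n \<in> carrier (braid_K n)"
  by (simp_all add: a_K_def b_K_def pclass_krels_closed)

lemma (in group) lcs_braid_K_subset_kernel:
  assumes n: "n \<ge> 3" and h: "h \<in> hom (braid_K n) G"
    and s21: "h (sigma_K n 2) = h (sigma_K n 1)"
  shows "lcs (braid_K n) 1 \<subseteq> kernel (braid_K n) G h"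
proof -
  interpret hom: group_hom "braid_K n" G h
    by (simp add: group_hom_def group_hom_axioms_def group_braid_K is_group h)
  note relations = braid_K_hom_relations[OF n h]
  have s: "h (sigma_K n i) = h (sigma_K n 1)" if "1 \<le> i" "i \<le> n - 1" for i
  proof (rule braid_generators_eq_if_first_two_eq[where s = "\<lambda>i. h (sigma_K n i)" and m = "n - 1"])
    show "h (sigma_K n i) \<in> carrier G" if "1 \<le> i" "i \<le> n - 1" for i
      using sigma_K_closed[OF that] by simp
  qed (use relations(1,2) s21 that in simp_all)
  have s1C: "h (sigma_K n 1) \<in> carrier G" using n sigma_K_closed[of 1 n] by simp
  have a_s1: "h (a_K n) \<otimes> h (sigma_K n 1) = h (sigma_K n 1) \<otimes> h (a_K n)"
    and b_s1: "h (b_K n) \<otimes> h (sigma_K n 1) = h (sigma_K n 1) \<otimes> h (b_K n)"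
    using relations(3,4) s21 by simp_all
  have a_b: "h (a_K n) \<otimes> h (b_K n) = h (b_K n) \<otimes> h (a_K n)"
    using commute_if_klein_relations[OF s1C _ _ b_s1 relations(5,6)] a_K_closed b_K_closed by simp
  have generator_images: "h t \<in> {h (a_K n), h (b_K n), h (sigma_K n 1)}"
    if "t \<in> insert (a_K n) (insert (b_K n) (sigma_K n ` {1..n - 1}))" for t
  proof -
    from that consider "t = a_K n" | "t = b_K n" | i where "i \<in> {1..n - 1}" "t = sigma_K n i"
      by blast
    then show ?thesis
    proof cases
      case (3 i)
      then show ?thesis using s[of i] by simp
    qed auto
  qed
  have generators_commute: "h t \<otimes> h u = h u \<otimes> h t"
    if "t \<in> insert (a_K n) (insert (b_K n) (sigma_K n ` {1..n - 1}))"
      and "u \<in> insert (a_K n) (insert (b_K n) (sigma_K n ` {1..n - 1}))" for t u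
    using generator_images[OF that(1)] generator_images[OF that(2)] a_s1 b_s1 a_b by auto
  show ?thesis
    by (rule hom.lcs_one_subset_kernel_if_generators_commute[OF _ carrier_braid_K_generate generators_commute])
      (auto simp: a_K_closed b_K_closed sigma_K_closed)
qed

fun kgen_transposition :: "kgen \<Rightarrow> nat \<Rightarrow> nat" where
  "kgen_transposition (GS i) = transpose i (Suc i)"
| "kgen_transposition GA = id"
| "kgen_transposition GB = id"

lemma kgen_transposition_involution: "kgen_transposition g \<circ> kgen_transposition g = id"
  by (cases g) simp_all

lemma word_action_krels:
  assumes "r \<in> krels n"
  shows "word_action kgen_transposition r = id"
proof -
  note eqrel = word_action_eqrel[OF kgen_transposition_involution]
  have braid: "transpose i (Suc i) \<circ> (transpose (Suc i) (Suc (Suc i)) \<circ> transpose i (Suc i)) =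
      transpose (Suc i) (Suc (Suc i)) \<circ> (transpose i (Suc i) \<circ> transpose (Suc i) (Suc (Suc i)))" for i
    by (rule ext) (simp add: transpose_def)
  have far: "transpose j (Suc j) \<circ> transpose i (Suc i) = transpose i (Suc i) \<circ> transpose j (Suc j)"
    if "i + 2 \<le> j \<or> j + 2 \<le> i" for i j
    using that by (intro ext) (auto simp: transpose_def)
  have twist: "word_action kgen_transposition (w @ rev w) = id" for w
    by (rule word_action_append_rev[OF kgen_transposition_involution])
  from assms show ?thesis
    unfolding krels_def
    by (elim UnE insertE CollectE exE conjE emptyE) (simp_all add: eqrel braid far twist)
qed

lemma sigma_K_inv_mult_ne_one:
  assumes "n \<ge> 3"
  shows "inv\<^bsub>braid_K n\<^esub> sigma_K n 2 \<otimes>\<^bsub>braid_K n\<^esub> sigma_K n 1 \<noteq> \<one>\<^bsub>braid_K n\<^esub>"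
proof
  assume "inv\<^bsub>braid_K n\<^esub> sigma_K n 2 \<otimes>\<^bsub>braid_K n\<^esub> sigma_K n 1 = \<one>\<^bsub>braid_K n\<^esub>"
  moreover have "inv\<^bsub>braid_K n\<^esub> sigma_K n 2 \<otimes>\<^bsub>braid_K n\<^esub> sigma_K n 1 =
      pclass (krels n) [(GS 2, True), (GS 1, False)]"
    using assms pclass_inverse_letter[of "GS 2" "kgens n" "krels n", symmetric]
    by (simp add: braid_K_def sigma_K_def presented_group_mult)
  ultimately have "pres_eq (krels n) [(GS 2, True), (GS 1, False)] []"
    by (simp add: braid_K_def presented_group_one pclass_eq_iff) (rule pres_eq.sym)
  then have "word_action kgen_transposition [(GS 2, True), (GS 1, False)] = id"
    using word_action_pres_eq[OF kgen_transposition_involution] word_action_krels by fastforce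
  then have "word_action kgen_transposition [(GS 2, True), (GS 1, False)] 1 = 1"
    by simp
  then show False by (simp add: transpose_def)
qed

lemma lcs_braid_K:
  assumes n: "n \<ge> 3"
  defines "c \<equiv> inv\<^bsub>braid_K n\<^esub> sigma_K n 2 \<otimes>\<^bsub>braid_K n\<^esub> sigma_K n 1"
  shows "lcs (braid_K n) 1 = normal_closure (braid_K n) {c}"
    and "lcs (braid_K n) 2 = lcs (braid_K n) 1"
proof -
  interpret group "braid_K n" by (rule group_braid_K)
  define N where "N = normal_closure (braid_K n) {c}"
  have s1: "sigma_K n 1 \<in> carrier (braid_K n)" and s2: "sigma_K n 2 \<in> carrier (braid_K n)"
    using n sigma_K_closed by auto
  then have c: "c \<in> carrier (braid_K n)" by (simp add: c_def)
  interpret N: normal N "braid_K n"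
    using normal_closure_normal c by (simp add: N_def)
  have "(\<lambda>x. x) \<in> hom (braid_K n) (braid_K n)" by (simp add: hom_def)
  from braid_K_hom_relations(1)[OF n this, of 1] n
  have "c \<in> lcs (braid_K n) 2"
    unfolding c_def using braid_inv_mult_in_lcs[OF s1 s2] by (simp add: numeral_2_eq_2)
  then have N_lcs2: "N \<subseteq> lcs (braid_K n) 2"
    unfolding N_def by (simp add: normal_closure_subset lcs_normal)
  interpret quotient: group_hom "braid_K n" "braid_K n Mod N" "\<lambda>a. N #>\<^bsub>braid_K n\<^esub> a"
    by (simp add: group_hom_def group_hom_axioms_def is_group N.factorgroup_is_group N.r_coset_hom_Mod)
  have "c \<in> kernel (braid_K n) (braid_K n Mod N) (\<lambda>a. N #>\<^bsub>braid_K n\<^esub> a)"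
    using subset_normal_closure[of "{c}"] c N.kernel_r_coset unfolding N_def by blast
  then have "N #>\<^bsub>braid_K n\<^esub> sigma_K n 2 = N #>\<^bsub>braid_K n\<^esub> sigma_K n 1"
  proof -
    have "sigma_K n 2 \<otimes>\<^bsub>braid_K n\<^esub> c = sigma_K n 1" using s1 s2 by (simp add: c_def)
    then show ?thesis
      using quotient.hom_mult[OF s2 c] \<open>c \<in> kernel _ _ _\<close> s2
      by (simp add: kernel_def del: mult_FactGroup one_FactGroup)
  qed
  then have "lcs (braid_K n) 1 \<subseteq> N"
    using group.lcs_braid_K_subset_kernel[OF N.factorgroup_is_group n N.r_coset_hom_Mod]
    by (simp add: N.kernel_r_coset)
  then show "lcs (braid_K n) 1 = normal_closure (braid_K n) {c}" "lcs (braid_K n) 2 = lcs (braid_K n) 1"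
    using N_lcs2 lcs_Suc_subset[of 1] by (auto simp: N_def numeral_2_eq_2)
qed

lemma (in group) not_residually_nilpotent_if_lcs_eq:
  assumes "lcs G (Suc i) = lcs G i" and "lcs G i \<noteq> {\<one>}"
  shows "\<not> residually_nilpotent G"
proof -
  have "(\<Inter>j\<in>{1..}. Gamma G j) = lcs G i"
  proof
    have "(\<Inter>j\<in>{1..}. Gamma G j) \<subseteq> Gamma G (Suc i)" by (rule INT_lower) simp
    then show "(\<Inter>j\<in>{1..}. Gamma G j) \<subseteq> lcs G i" by (simp add: Gamma_def)
    have "lcs G i \<subseteq> lcs G (j - 1)" for j
      using lcs_antimono[of "j - 1" i] lcs_eq_if_Suc_eq[OF assms(1), of "j - 1"] by (cases "j - 1 \<le> i") auto
    then show "lcs G i \<subseteq> (\<Inter>j\<in>{1..}. Gamma G j)"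
      by (simp add: Gamma_def INT_greatest)
  qed
  then show ?thesis using assms(2) by (simp add: residually_nilpotent_def)
qed

theorem proposition5p18:
  fixes n :: nat
  assumes "n \<ge> 3"
  shows "(\<forall>i\<ge>3. Gamma (braid_K n) 2 = Gamma (braid_K n) i)
    \<and> Gamma (braid_K n) 2 =
        normal_closure (braid_K n)
          {inv\<^bsub>braid_K n\<^esub> (sigma_K n 2) \<otimes>\<^bsub>braid_K n\<^esub> sigma_K n 1}
    \<and> Gamma (braid_K n) 2 \<noteq> {\<one>\<^bsub>braid_K n\<^esub>}
    \<and> \<not> residually_nilpotent (braid_K n)"
proof -
  interpret group "braid_K n" by (rule group_braid_K)
  let ?c = "inv\<^bsub>braid_K n\<^esub> (sigma_K n 2) \<otimes>\<^bsub>braid_K n\<^esub> sigma_K n 1"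
  have Gamma2: "Gamma (braid_K n) 2 = lcs (braid_K n) 1" by (simp add: Gamma_def)
  have stable: "Gamma (braid_K n) i = lcs (braid_K n) 1" if "i \<ge> 2" for i
    using lcs_eq_if_Suc_eq[of 1 "i - 1"] lcs_braid_K(2)[OF assms] that
    by (simp add: Gamma_def numeral_2_eq_2)
  have c: "?c \<in> carrier (braid_K n)" using assms sigma_K_closed by simp
  have "?c \<in> lcs (braid_K n) 1"
    unfolding lcs_braid_K(1)[OF assms] using subset_normal_closure[of "{?c}"] c by simp
  then have nontrivial: "lcs (braid_K n) 1 \<noteq> {\<one>\<^bsub>braid_K n\<^esub>}"
    using sigma_K_inv_mult_ne_one[OF assms] by blast
  show ?thesis
    using stable Gamma2 lcs_braid_K[OF assms] nontrivial
      not_residually_nilpotent_if_lcs_eq[of 1] by (simp add: numeral_2_eq_2)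
qed

end
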